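(* Every split graph that is CIS is $\cap$-edge simplicial.
   Context: A graph is split if its vertex set can be partitioned into a clique and a stable set. A graph is CIS if every maximal clique and every maximal stable set intersect. A clique $C$ is simplicial if $C=N[v]$ for some vertex $v$; a graph is edge simplicial if every edge lies in a simplicial clique; it is $\cap$-edge simplicial if both it and its complement are edge simplicial. *)

theory Defs
  imports Main
begin

definition graph :: "'a set \<Rightarrow> ('a \<Rightarrow> 'a \<Rightarrow> bool) \<Rightarrow> bool" where
  "graph V E \<longleftrightarrow> finite V \<and> (\<forall>x y. E x y \<longrightarrow> x \<in> V \<and> y \<in> V \<and> x \<noteq> y \<and> E y x)"

definition clique :: "'a set \<Rightarrow> ('a \<Rightarrow> 'a \<Rightarrow> bool) \<Rightarrow> 'a set \<Rightarrow> bool" where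
  "clique V E C \<longleftrightarrow> C \<subseteq> V \<and> (\<forall>x\<in>C. \<forall>y\<in>C. x \<noteq> y \<longrightarrow> E x y)"

definition stable :: "'a set \<Rightarrow> ('a \<Rightarrow> 'a \<Rightarrow> bool) \<Rightarrow> 'a set \<Rightarrow> bool" where
  "stable V E S \<longleftrightarrow> S \<subseteq> V \<and> (\<forall>x\<in>S. \<forall>y\<in>S. x \<noteq> y \<longrightarrow> \<not> E x y)"

definition max_clique :: "'a set \<Rightarrow> ('a \<Rightarrow> 'a \<Rightarrow> bool) \<Rightarrow> 'a set \<Rightarrow> bool" where
  "max_clique V E C \<longleftrightarrow> clique V E C \<and> (\<forall>D. clique V E D \<and> C \<subseteq> D \<longrightarrow> D = C)"

definition max_stable :: "'a set \<Rightarrow> ('a \<Rightarrow> 'a \<Rightarrow> bool) \<Rightarrow> 'a set \<Rightarrow> bool" where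
  "max_stable V E S \<longleftrightarrow> stable V E S \<and> (\<forall>T. stable V E T \<and> S \<subseteq> T \<longrightarrow> T = S)"

definition split_graph :: "'a set \<Rightarrow> ('a \<Rightarrow> 'a \<Rightarrow> bool) \<Rightarrow> bool" where
  "split_graph V E \<longleftrightarrow> (\<exists>K S. K \<union> S = V \<and> K \<inter> S = {} \<and> clique V E K \<and> stable V E S)"

definition CIS :: "'a set \<Rightarrow> ('a \<Rightarrow> 'a \<Rightarrow> bool) \<Rightarrow> bool" where
  "CIS V E \<longleftrightarrow> (\<forall>C S. max_clique V E C \<and> max_stable V E S \<longrightarrow> C \<inter> S \<noteq> {})"

definition closed_nbhd :: "'a set \<Rightarrow> ('a \<Rightarrow> 'a \<Rightarrow> bool) \<Rightarrow> 'a \<Rightarrow> 'a set" where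
  "closed_nbhd V E v = insert v {u \<in> V. E v u}"

definition simplicial_clique :: "'a set \<Rightarrow> ('a \<Rightarrow> 'a \<Rightarrow> bool) \<Rightarrow> 'a set \<Rightarrow> bool" where
  "simplicial_clique V E C \<longleftrightarrow> clique V E C \<and> (\<exists>v\<in>V. C = closed_nbhd V E v)"

definition edge_simplicial :: "'a set \<Rightarrow> ('a \<Rightarrow> 'a \<Rightarrow> bool) \<Rightarrow> bool" where
  "edge_simplicial V E \<longleftrightarrow>
     (\<forall>x\<in>V. \<forall>y\<in>V. E x y \<longrightarrow> (\<exists>C. simplicial_clique V E C \<and> x \<in> C \<and> y \<in> C))"

definition compl_graph :: "'a set \<Rightarrow> ('a \<Rightarrow> 'a \<Rightarrow> bool) \<Rightarrow> 'a \<Rightarrow> 'a \<Rightarrow> bool" where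
  "compl_graph V E x y \<longleftrightarrow> x \<in> V \<and> y \<in> V \<and> x \<noteq> y \<and> \<not> E x y"

definition cap_edge_simplicial :: "'a set \<Rightarrow> ('a \<Rightarrow> 'a \<Rightarrow> bool) \<Rightarrow> bool" where
  "cap_edge_simplicial V E \<longleftrightarrow> edge_simplicial V E \<and> edge_simplicial V (compl_graph V E)"

end

theory Submission
  imports Defs
begin

text \<open>Fix a split partition V = K \<union> S with K a clique and S stable. For s \<in> S the closed
neighbourhood N[s] lies in K \<union> {s}, so it is a simplicial clique and covers every edge at s.
An edge inside K is covered by N[s] if some s \<in> S sees all of K; otherwise K is a maximal
clique, so by CIS the disjoint stable set S is not maximal, and any k \<in> K extending S has
N[k] = K. Complementation swaps K and S and preserves both splitness and CIS, giving the
same conclusion for the complement.\<close>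

lemma graphD:
  assumes "graph V E" "E x y"
  shows "x \<in> V" "y \<in> V" "x \<noteq> y" "E y x"
  using assms unfolding graph_def by blast+

lemma cliqueD: "clique V E C \<Longrightarrow> x \<in> C \<Longrightarrow> y \<in> C \<Longrightarrow> x \<noteq> y \<Longrightarrow> E x y"
  unfolding clique_def by blast

lemma stableD: "stable V E S \<Longrightarrow> x \<in> S \<Longrightarrow> y \<in> S \<Longrightarrow> x \<noteq> y \<Longrightarrow> \<not> E x y"
  unfolding stable_def by blast

lemma mem_closed_nbhd: "u \<in> closed_nbhd V E v \<longleftrightarrow> u = v \<or> (u \<in> V \<and> E v u)"
  unfolding closed_nbhd_def by simp

lemma neighbour_of_stable_side_in_clique_side:
  assumes g: "graph V E" and V: "K \<union> S = V" and S: "stable V E S"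
    and v: "v \<in> S" and e: "E v u"
  shows "u \<in> K"
proof -
  have "u \<noteq> v" "u \<in> V" using graphD[OF g e] by auto
  then have "u \<notin> S" using stableD[OF S v] e by blast
  with \<open>u \<in> V\<close> V show ?thesis by blast
qed

lemma simplicial_closed_nbhd_stable_side:
  assumes g: "graph V E" and V: "K \<union> S = V" and K: "clique V E K" and S: "stable V E S"
    and v: "v \<in> S"
  shows "simplicial_clique V E (closed_nbhd V E v)"
proof -
  have vV: "v \<in> V" using v V by blast
  have nbK: "u \<in> K" if "E v u" for u
    using neighbour_of_stable_side_in_clique_side[OF g V S v that] .
  have "clique V E (closed_nbhd V E v)"
    unfolding clique_def
  proof (intro conjI ballI impI)
    show "closed_nbhd V E v \<subseteq> V" using vV by (auto simp: mem_closed_nbhd)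
  next
    fix x y assume x: "x \<in> closed_nbhd V E v" and y: "y \<in> closed_nbhd V E v" and "x \<noteq> y"
    consider "x = v" | "y = v" | "E v x" "E v y"
      using x y by (auto simp: mem_closed_nbhd)
    then show "E x y"
    proof cases
      case 1 then show ?thesis using y \<open>x \<noteq> y\<close> by (simp add: mem_closed_nbhd)
    next
      case 2 then show ?thesis using x \<open>x \<noteq> y\<close> graphD(4)[OF g] by (auto simp: mem_closed_nbhd)
    next
      case 3 then show ?thesis using cliqueD[OF K] nbK \<open>x \<noteq> y\<close> by blast
    qed
  qed
  with vV show ?thesis unfolding simplicial_clique_def by blast
qed

lemma max_clique_clique_side:
  assumes V: "K \<union> S = V" and K: "clique V E K" and undominated: "\<forall>s\<in>S. \<exists>k\<in>K. \<not> E s k"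
  shows "max_clique V E K"
  unfolding max_clique_def
proof (intro conjI allI impI)
  fix D assume D: "clique V E D \<and> K \<subseteq> D"
  show "D = K"
  proof (rule ccontr)
    assume "D \<noteq> K"
    then obtain d where d: "d \<in> D" "d \<notin> K" using D by blast
    then have "d \<in> S" using D V unfolding clique_def by blast
    moreover have "E d k" if "k \<in> K" for k
      using D d that by (blast intro: cliqueD)
    ultimately show False using undominated by blast
  qed
qed (fact K)

lemma closed_nbhd_eq_clique_side:
  assumes V: "K \<union> S = V" and K: "clique V E K"
    and k: "k \<in> K" and kS: "stable V E (insert k S)"
  shows "closed_nbhd V E k = K"
proof
  show "closed_nbhd V E k \<subseteq> K"
  proof
    fix u assume u: "u \<in> closed_nbhd V E k"
    show "u \<in> K"
    proof (cases "u = k")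
      case False
      then have "u \<in> V" "E k u" using u by (auto simp: mem_closed_nbhd)
      moreover have "u \<notin> S" using stableD[OF kS, of k u] \<open>E k u\<close> False by blast
      ultimately show ?thesis using V by blast
    qed (use k in simp)
  qed
  show "K \<subseteq> closed_nbhd V E k"
  proof
    fix u assume "u \<in> K"
    then show "u \<in> closed_nbhd V E k"
      using V cliqueD[OF K k] by (cases "u = k") (auto simp: mem_closed_nbhd)
  qed
qed

lemma split_CIS_edge_simplicial:
  assumes g: "graph V E" and V: "K \<union> S = V" and disj: "K \<inter> S = {}"
    and K: "clique V E K" and S: "stable V E S" and cis: "CIS V E"
  shows "edge_simplicial V E"
  unfolding edge_simplicial_def
proof (intro ballI impI)
  fix x y assume xV: "x \<in> V" and yV: "y \<in> V" and exy: "E x y"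
  note nbhd_simplicial = simplicial_closed_nbhd_stable_side[OF g V K S]
  show "\<exists>C. simplicial_clique V E C \<and> x \<in> C \<and> y \<in> C"
  proof (cases "x \<in> S \<or> y \<in> S")
    case True
    moreover have "x \<in> closed_nbhd V E x \<and> y \<in> closed_nbhd V E x"
      and "x \<in> closed_nbhd V E y \<and> y \<in> closed_nbhd V E y"
      using exy graphD[OF g exy] by (auto simp: mem_closed_nbhd)
    ultimately show ?thesis using nbhd_simplicial by blast
  next
    case False
    then have xK: "x \<in> K" and yK: "y \<in> K" using xV yV V by auto
    show ?thesis
    proof (cases "\<exists>s\<in>S. \<forall>k\<in>K. E s k")
      case True
      then obtain s where "s \<in> S" "\<forall>k\<in>K. E s k" by blast
      moreover have "x \<in> closed_nbhd V E s" "y \<in> closed_nbhd V E s"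
        using calculation xK yK xV yV by (auto simp: mem_closed_nbhd)
      ultimately show ?thesis using nbhd_simplicial by blast
    next
      case False
      then have "max_clique V E K" using max_clique_clique_side[OF V K] by blast
      with cis disj have "\<not> max_stable V E S" unfolding CIS_def by blast
      then obtain T where T: "stable V E T" "S \<subseteq> T" "T \<noteq> S"
        using S unfolding max_stable_def by blast
      then obtain k where "k \<in> T" "k \<notin> S" by blast
      have kK: "k \<in> K" using T(1) \<open>k \<in> T\<close> \<open>k \<notin> S\<close> V unfolding stable_def by blast
      have "stable V E (insert k S)"
        using T \<open>k \<in> T\<close> unfolding stable_def by blast
      then have "closed_nbhd V E k = K"
        using closed_nbhd_eq_clique_side[OF V K kK] by blast
      then have "simplicial_clique V E K"
        using K kK V unfolding simplicial_clique_def by blast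
      with xK yK show ?thesis by blast
    qed
  qed
qed

lemma graph_compl_graph: "graph V E \<Longrightarrow> graph V (compl_graph V E)"
  unfolding graph_def compl_graph_def by blast

lemma clique_compl_graph_iff: "clique V (compl_graph V E) C \<longleftrightarrow> stable V E C"
  unfolding clique_def stable_def compl_graph_def by auto

lemma stable_compl_graph_iff: "stable V (compl_graph V E) C \<longleftrightarrow> clique V E C"
  unfolding clique_def stable_def compl_graph_def by auto

lemma max_clique_compl_graph_iff: "max_clique V (compl_graph V E) C \<longleftrightarrow> max_stable V E C"
  unfolding max_clique_def max_stable_def clique_compl_graph_iff by simp

lemma max_stable_compl_graph_iff: "max_stable V (compl_graph V E) C \<longleftrightarrow> max_clique V E C"
  unfolding max_clique_def max_stable_def stable_compl_graph_iff by simp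

lemma CIS_compl_graph_iff: "CIS V (compl_graph V E) \<longleftrightarrow> CIS V E"
  unfolding CIS_def max_clique_compl_graph_iff max_stable_compl_graph_iff by blast

theorem proposition26:
  fixes V :: "'a set" and E :: "'a \<Rightarrow> 'a \<Rightarrow> bool"
  assumes "graph V E" and "split_graph V E" and "CIS V E"
  shows "cap_edge_simplicial V E"
proof -
  obtain K S where V: "K \<union> S = V" "K \<inter> S = {}" and K: "clique V E K" and S: "stable V E S"
    using assms(2) unfolding split_graph_def by blast
  have "edge_simplicial V E"
    using split_CIS_edge_simplicial[OF assms(1) V K S assms(3)] .
  moreover have "edge_simplicial V (compl_graph V E)"
  proof (rule split_CIS_edge_simplicial)
    show "graph V (compl_graph V E)"
      using assms(1) by (rule graph_compl_graph)
    show "S \<union> K = V" "S \<inter> K = {}" using V by blast+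
    show "clique V (compl_graph V E) S" "stable V (compl_graph V E) K"
      using K S by (simp_all add: clique_compl_graph_iff stable_compl_graph_iff)
    show "CIS V (compl_graph V E)" using assms(3) by (simp add: CIS_compl_graph_iff)
  qed
  ultimately show ?thesis unfolding cap_edge_simplicial_def ..
qed

end
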